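(* Let $d\ge 1$, $\alpha>\beta>d$, $a,b>0$, and $\phi(r)=a r^{-\alpha}-b r^{-\beta}$ for $r>0$. For $L\in\mathcal L_d(1)$ set $$\lambda^\phi_L:=\left(\frac{\alpha a\,\zeta_L(\alpha)}{\beta b\,\zeta_L(\beta)}\right)^{\frac1{\alpha-\beta}},$$ which is the unique minimizer of $\lambda\mapsto E_\phi[\lambda L]$ on $(0,\infty)$. Suppose that $L_d\in\mathcal L_d(1)$ is a minimizer of $L\mapsto\zeta_L(\beta)$ on $\mathcal L_d(1)$ and that $\lambda^\phi_{L_d}L_d$ is the unique (up to isometries) global minimizer of $E_\phi$ on $\mathcal L_d$. Then $L_d$ is the unique (up to isometries) minimizer of $L\mapsto\lambda^\phi_L$ on $\mathcal L_d(1)$; that is, $\lambda^\phi_L\ge\lambda^\phi_{L_d}$ for all $L\in\mathcal L_d(1)$, with equality only if $L$ is isometric to $L_d$.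
   Context: $\mathcal L_d$ denotes the set of all lattices $L=\bigoplus_{i=1}^d\mathbb Z u_i$ with $\{u_i\}$ a basis of $\mathbb R^d$, and $\mathcal L_d(1)\subset\mathcal L_d$ the lattices with $|\det(u_1,\dots,u_d)|=1$. For $s>d$, the Epstein zeta function is $\zeta_L(s)=\sum_{q\in L\setminus\{0\}}|q|^{-s}$. For a function $f:(0,\infty)\to\mathbb R$ with $|f(r)|=O(r^{-d-\eta})$ as $r\to\infty$ for some $\eta>0$, $E_f[L]:=\sum_{q\in L\setminus\{0\}}f(|q|)$. Uniqueness of minimizers among lattices is always understood up to isometries. *)

theory Defs
  imports "HOL-Analysis.Analysis"
begin

text \<open>Lattices in R^d, with d = CARD('n). A lattice is the set of integer
combinations of a basis u_1..u_d (indexed by the finite type 'n).\<close>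

definition lattice_gen :: "('n::finite \<Rightarrow> real^'n) \<Rightarrow> (real^'n) set" where
  "lattice_gen u = {(\<Sum>i\<in>UNIV. of_int (c i) *\<^sub>R u i) | c :: 'n \<Rightarrow> int. True}"

definition is_basis_family :: "('n::finite \<Rightarrow> real^'n) \<Rightarrow> bool" where
  "is_basis_family u \<longleftrightarrow> inj u \<and> independent (range u) \<and> span (range u) = UNIV"

definition is_lattice :: "(real^'n::finite) set \<Rightarrow> bool" where
  "is_lattice L \<longleftrightarrow> (\<exists>u. is_basis_family u \<and> L = lattice_gen u)"

definition is_unimodular_lattice :: "(real^'n::finite) set \<Rightarrow> bool" where
  "is_unimodular_lattice L \<longleftrightarrow>
     (\<exists>u. is_basis_family u \<and> L = lattice_gen u \<and> \<bar>det (\<chi> i. u i)\<bar> = 1)"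

definition epstein_zeta :: "(real^'n::finite) set \<Rightarrow> real \<Rightarrow> real" where
  "epstein_zeta L s = (\<Sum>\<^sub>\<infinity>q\<in>L - {0}. norm q powr (-s))"

definition lattice_energy :: "(real \<Rightarrow> real) \<Rightarrow> (real^'n::finite) set \<Rightarrow> real" where
  "lattice_energy f L = (\<Sum>\<^sub>\<infinity>q\<in>L - {0}. f (norm q))"

definition scale_lattice :: "real \<Rightarrow> (real^'n::finite) set \<Rightarrow> (real^'n) set" where
  "scale_lattice t L = (\<lambda>q. t *\<^sub>R q) ` L"

text \<open>Isometric lattices: related by a linear isometry (lattices contain 0).\<close>
definition isometric_lattices :: "(real^'n::finite) set \<Rightarrow> (real^'n) set \<Rightarrow> bool" where
  "isometric_lattices L M \<longleftrightarrow> (\<exists>T. orthogonal_transformation T \<and> T ` L = M)"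

definition lj_lambda :: "real \<Rightarrow> real \<Rightarrow> real \<Rightarrow> real \<Rightarrow> (real^'n::finite) set \<Rightarrow> real" where
  "lj_lambda a b \<alpha> \<beta> L =
     ((\<alpha> * a * epstein_zeta L \<alpha>) / (\<beta> * b * epstein_zeta L \<beta>)) powr (1 / (\<alpha> - \<beta>))"

end

theory Submission
  imports Defs
begin

text \<open>For every unimodular lattice \<open>L\<close>, the energy of \<open>\<lambda>\<^sub>L L\<close> is
  \<open>a \<lambda>\<^sub>L\<^sup>-\<^sup>\<alpha> \<zeta>\<^sub>L(\<alpha>) - b \<lambda>\<^sub>L\<^sup>-\<^sup>\<beta> \<zeta>\<^sub>L(\<beta>)\<close>, and the defining equation of \<open>\<lambda>\<^sub>L\<close> turns
  this into \<open>-(1 - \<beta>/\<alpha>) b \<zeta>\<^sub>L(\<beta>) \<lambda>\<^sub>L\<^sup>-\<^sup>\<beta>\<close>. Global minimality of \<open>\<lambda>\<^sub>L\<^sub>d L\<^sub>d\<close> gives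
  \<open>\<zeta>\<^sub>L(\<beta>) \<lambda>\<^sub>L\<^sup>-\<^sup>\<beta> \<le> \<zeta>\<^sub>L\<^sub>d(\<beta>) \<lambda>\<^sub>L\<^sub>d\<^sup>-\<^sup>\<beta>\<close>, and minimality of \<open>\<zeta>\<^sub>L\<^sub>d(\<beta>)\<close> then forces
  \<open>\<lambda>\<^sub>L \<ge> \<lambda>\<^sub>L\<^sub>d\<close>. In the equality case both energies agree, so \<open>\<lambda>\<^sub>L L\<close> is isometric
  to \<open>\<lambda>\<^sub>L\<^sub>d L\<^sub>d\<close>, and dividing by the common factor gives \<open>L \<cong> L\<^sub>d\<close>. The analytic
  input is the convergence of Epstein sums for \<open>s > d\<close>, obtained by comparison with
  \<open>\<Prod>\<^sub>i (1 + |c\<^sub>i|)\<^sup>-\<^sup>s\<^sup>/\<^sup>d\<close> over the integer coefficient vectors \<open>c\<close>.\<close>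

lemma summable_on_int_powr:
  fixes t :: real
  assumes "t > 1"
  shows "(\<lambda>k::int. (1 + \<bar>real_of_int k\<bar>) powr (-t)) summable_on UNIV"
proof -
  have "summable (\<lambda>n. real n powr (-t))"
    using assms by (subst summable_real_powr_iff) simp
  then have "summable (\<lambda>n. real (Suc n) powr (-t))"
    by (subst summable_Suc_iff)
  then have nat: "(\<lambda>n::nat. (1 + real n) powr (-t)) summable_on UNIV"
    by (subst summable_on_UNIV_nonneg_real_iff) (auto simp: add.commute)
  let ?g = "\<lambda>k::int. (1 + \<bar>real_of_int k\<bar>) powr (-t)"
  have pos: "?g summable_on range int"
    by (subst summable_on_reindex) (auto simp: o_def nat)
  have neg: "?g summable_on range (\<lambda>n. - int n)"
    by (subst summable_on_reindex) (auto simp: o_def nat inj_on_def)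
  have "UNIV = range int \<union> range (\<lambda>n. - int n)"
  proof (intro set_eqI iffI)
    fix k :: int
    show "k \<in> range int \<union> range (\<lambda>n. - int n)"
      by (cases "k \<ge> 0") (auto intro: image_eqI[of _ _ "nat k"] image_eqI[of _ _ "nat (- k)"])
  qed simp
  then show ?thesis
    using summable_on_union[OF pos neg] by simp
qed

lemma summable_on_int_vec_prod_powr:
  fixes t :: real
  assumes "t > 1"
  shows "(\<lambda>c::'n::finite \<Rightarrow> int. \<Prod>i\<in>UNIV. (1 + \<bar>real_of_int (c i)\<bar>) powr (-t)) summable_on UNIV"
proof -
  have "Infinite_Set_Sum.abs_summable_on (\<lambda>k::int. (1 + \<bar>real_of_int k\<bar>) powr (-t)) UNIV"
    using summable_on_int_powr[OF assms] by (intro abs_summable_equivalent[THEN iffD1]) simp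
  then have "Infinite_Set_Sum.abs_summable_on
      (\<lambda>c::'n \<Rightarrow> int. \<Prod>i\<in>UNIV. (1 + \<bar>real_of_int (c i)\<bar>) powr (-t)) (PiE UNIV (\<lambda>_. UNIV))"
    by (intro abs_summable_on_prod_PiE) auto
  then have "(\<lambda>c::'n \<Rightarrow> int. norm (\<Prod>i\<in>UNIV. (1 + \<bar>real_of_int (c i)\<bar>) powr (-t))) summable_on UNIV"
    by (intro abs_summable_equivalent[THEN iffD2]) simp
  then show ?thesis
    by (rule abs_summable_summable)
qed

definition lincomb :: "('n::finite \<Rightarrow> real^'n) \<Rightarrow> real^'n \<Rightarrow> real^'n" where
  "lincomb u x = (\<Sum>i\<in>UNIV. (x $ i) *\<^sub>R u i)"

definition int_vec :: "('n::finite \<Rightarrow> int) \<Rightarrow> real^'n" where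
  "int_vec c = (\<chi> i. real_of_int (c i))"

lemma linear_lincomb: "linear (lincomb u)"
  unfolding lincomb_def
  by (auto intro!: linearI simp: algebra_simps sum.distrib scaleR_sum_right)

lemma inj_lincomb:
  assumes "is_basis_family u"
  shows "inj (lincomb u)"
proof -
  have iu: "inj u" and ind: "independent (range u)"
    using assms by (auto simp: is_basis_family_def)
  have "x = 0" if "lincomb u x = 0" for x
  proof -
    define c where "c v = x $ inv u v" for v
    have "(\<Sum>v\<in>range u. c v *\<^sub>R v) = lincomb u x"
      using iu by (simp add: sum.reindex c_def lincomb_def)
    with that ind have "\<forall>v\<in>range u. c v = 0"
      by (simp add: independent_explicit)
    then show ?thesis
      using iu by (simp add: c_def vec_eq_iff)
  qed
  then show ?thesis
    by (simp add: linear_injective_0[OF linear_lincomb])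
qed

lemma inj_int_vec: "inj int_vec"
  unfolding inj_def int_vec_def vec_eq_iff by (simp add: fun_eq_iff)

lemma lattice_gen_eq_range: "lattice_gen u = range (\<lambda>c. lincomb u (int_vec c))"
  by (auto simp: lattice_gen_def lincomb_def int_vec_def)

lemma prod_one_plus_abs_le_norm_int_vec:
  fixes c :: "'n::finite \<Rightarrow> int"
  assumes "c \<noteq> (\<lambda>_. 0)"
  shows "norm (int_vec c) \<ge> 1"
    and "(\<Prod>i\<in>UNIV. 1 + \<bar>real_of_int (c i)\<bar>) \<le> (2 * norm (int_vec c)) ^ CARD('n)"
proof -
  have comp: "\<bar>real_of_int (c i)\<bar> \<le> norm (int_vec c)" for i
    using component_le_norm_cart[of "int_vec c" i] by (simp add: int_vec_def)
  obtain j where "c j \<noteq> 0"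
    using assms by auto
  then show N1: "norm (int_vec c) \<ge> 1"
    using comp[of j] by linarith
  have "(\<Prod>i\<in>UNIV. 1 + \<bar>real_of_int (c i)\<bar>) \<le> (\<Prod>i\<in>(UNIV::'n set). 2 * norm (int_vec c))"
    using N1 comp by (intro prod_mono) (smt (verit))
  then show "(\<Prod>i\<in>UNIV. 1 + \<bar>real_of_int (c i)\<bar>) \<le> (2 * norm (int_vec c)) ^ CARD('n)"
    by simp
qed

lemma lincomb_int_vec_powr_bound:
  fixes u :: "'n::finite \<Rightarrow> real^'n"
  assumes "is_basis_family u" and "s > real CARD('n)"
  obtains K where "\<And>c. norm (lincomb u (int_vec c)) powr (-s)
    \<le> K * (\<Prod>i\<in>UNIV. (1 + \<bar>real_of_int (c i)\<bar>) powr (-(s / CARD('n))))"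
proof -
  obtain B where B: "B > 0" "\<And>x. B * norm x \<le> norm (lincomb u x)"
    using linear_inj_bounded_below_pos[OF linear_lincomb inj_lincomb[OF assms(1)]] by blast
  define n where "n = real CARD('n)"
  have n1: "n \<ge> 1" and s0: "s > 0"
    using assms(2) by (auto simp: n_def Suc_le_eq)
  have "norm (lincomb u (int_vec c)) powr (-s)
      \<le> B powr (-s) * 2 powr s * (\<Prod>i\<in>UNIV. (1 + \<bar>real_of_int (c i)\<bar>) powr (-(s / n)))" for c
  proof (cases "c = (\<lambda>_. 0)")
    case True
    then show ?thesis
      by (simp add: int_vec_def lincomb_def prod_nonneg)
  next
    case False
    define N where "N = norm (int_vec c)"
    note N = prod_one_plus_abs_le_norm_int_vec[OF False, folded N_def]
    have "B * N > 0"
      using B(1) N(1) by simp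
    then have "norm (lincomb u (int_vec c)) powr (-s) \<le> (B * N) powr (-s)"
      using B(2) s0 by (intro powr_mono2') (auto simp: N_def)
    also have "\<dots> = B powr (-s) * 2 powr s * ((2 * N) powr n) powr (-(s / n))"
      using B(1) N(1) n1 by (simp add: powr_mult powr_powr powr_minus field_simps)
    also have "((2 * N) powr n) powr (-(s / n)) \<le> (\<Prod>i\<in>UNIV. 1 + \<bar>real_of_int (c i)\<bar>) powr (-(s / n))"
      using N(1,2) n1 s0 by (intro powr_mono2') (auto intro: prod_pos simp: n_def powr_realpow)
    finally show ?thesis
      using B(1) by (simp add: prod_powr_distrib mult_left_mono)
  qed
  then show ?thesis
    using that unfolding n_def by blast
qed

lemma epstein_summable:
  fixes u :: "'n::finite \<Rightarrow> real^'n"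
  assumes "is_basis_family u" and "s > real CARD('n)"
  shows "(\<lambda>q. norm q powr (-s)) summable_on (lattice_gen u - {0})"
proof -
  obtain K where K: "\<And>c. norm (lincomb u (int_vec c)) powr (-s)
      \<le> K * (\<Prod>i\<in>UNIV. (1 + \<bar>real_of_int (c i)\<bar>) powr (-(s / CARD('n))))"
    using lincomb_int_vec_powr_bound[OF assms] by blast
  have "s / CARD('n) > 1"
    using assms(2) by (simp add: field_simps)
  then have "(\<lambda>c. norm (lincomb u (int_vec c)) powr (-s)) summable_on UNIV"
    by (intro summable_on_comparison_test[OF summable_on_cmult_right[OF
          summable_on_int_vec_prod_powr]]) (use K in auto)
  moreover have "inj (\<lambda>c. lincomb u (int_vec c))"
    using inj_compose[OF inj_lincomb[OF assms(1)] inj_int_vec] by (simp add: o_def)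
  ultimately have "(\<lambda>q. norm q powr (-s)) summable_on lattice_gen u"
    unfolding lattice_gen_eq_range by (simp add: summable_on_reindex o_def)
  then show ?thesis
    by (rule summable_on_subset) auto
qed

lemma basis_mem_lattice_gen: "u i \<in> lattice_gen u"
proof -
  have "(\<Sum>j\<in>UNIV. of_int (if j = i then 1 else 0) *\<^sub>R u j) = (\<Sum>j\<in>UNIV. if j = i then u j else 0)"
    by (rule sum.cong) auto
  then show ?thesis
    unfolding lattice_gen_def by (intro CollectI exI[of _ "\<lambda>j. if j = i then 1 else 0"]) simp
qed

lemma basis_family_nonzero: "is_basis_family u \<Longrightarrow> u i \<noteq> 0"
  using real_vector.dependent_zero[of "range u"] by (auto simp: is_basis_family_def)

lemma epstein_zeta_pos:
  fixes u :: "'n::finite \<Rightarrow> real^'n"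
  assumes "is_basis_family u" and "s > real CARD('n)"
  shows "epstein_zeta (lattice_gen u) s > 0"
proof -
  fix i :: 'n
  have ui: "u i \<in> lattice_gen u - {0}"
    using basis_mem_lattice_gen basis_family_nonzero[OF assms(1)] by auto
  have "0 < infsum (\<lambda>q. norm q powr (-s)) {u i}"
    using basis_family_nonzero[OF assms(1)] by simp
  also have "\<dots> \<le> epstein_zeta (lattice_gen u) s"
    unfolding epstein_zeta_def using ui
    by (intro infsum_mono_neutral epstein_summable[OF assms]) auto
  finally show ?thesis .
qed

lemma is_basis_family_scaleR:
  assumes "is_basis_family u" and "t \<noteq> 0"
  shows "is_basis_family (\<lambda>i. t *\<^sub>R u i)"
proof -
  have R: "range (\<lambda>i. t *\<^sub>R u i) = (\<lambda>x. t *\<^sub>R x) ` range u"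
    by auto
  have lin: "linear (\<lambda>x::real^'n. t *\<^sub>R x)"
    by (simp add: linear_scaleR_left linearI scaleR_add_right)
  have surj: "surj (\<lambda>x::real^'n. t *\<^sub>R x)"
    using assms(2) by (metis surjI scaleR_scaleR right_inverse scaleR_one)
  have "inj (\<lambda>i. t *\<^sub>R u i)"
    using assms by (auto simp: is_basis_family_def inj_def)
  moreover have "independent (range (\<lambda>i. t *\<^sub>R u i))"
    unfolding R using assms
    by (intro real_vector.linear_independent_injective_image[OF lin])
       (auto simp: is_basis_family_def inj_on_def)
  moreover have "span (range (\<lambda>i. t *\<^sub>R u i)) = UNIV"
    unfolding R real_vector.linear_span_image[OF lin] using assms(1) surj
    by (simp add: is_basis_family_def)
  ultimately show ?thesis
    by (simp add: is_basis_family_def)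
qed

lemma lattice_gen_scaleR:
  fixes u :: "'n::finite \<Rightarrow> real^'n"
  shows "lattice_gen (\<lambda>i. t *\<^sub>R u i) = scale_lattice t (lattice_gen u)"
proof -
  have eq: "(\<Sum>i\<in>UNIV. of_int (c i) *\<^sub>R (t *\<^sub>R u i)) = t *\<^sub>R (\<Sum>i\<in>UNIV. of_int (c i) *\<^sub>R u i)"
    for c :: "'n \<Rightarrow> int"
    by (simp add: scaleR_sum_right mult.commute)
  show ?thesis
    unfolding lattice_gen_def scale_lattice_def eq by blast
qed

lemma is_lattice_scale_lattice:
  assumes "is_lattice L" and "t \<noteq> 0"
  shows "is_lattice (scale_lattice t L)"
  using assms is_basis_family_scaleR lattice_gen_scaleR unfolding is_lattice_def by metis

lemma isometric_lattices_scale_cancel: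
  assumes "isometric_lattices (scale_lattice t L) (scale_lattice t M)" and "t \<noteq> 0"
  shows "isometric_lattices L M"
proof -
  obtain T where T: "orthogonal_transformation T" "T ` scale_lattice t L = scale_lattice t M"
    using assms(1) unfolding isometric_lattices_def by blast
  have "scale_lattice (1 / t) (T ` scale_lattice t L) = T ` L"
    using assms(2) linear_cmul[OF orthogonal_transformation_linear[OF T(1)]]
    by (simp add: scale_lattice_def image_image)
  moreover have "scale_lattice (1 / t) (scale_lattice t M) = M"
    using assms(2) by (simp add: scale_lattice_def image_image)
  ultimately show ?thesis
    using T unfolding isometric_lattices_def by auto
qed

lemma lattice_energy_scale_lattice:
  fixes u :: "'n::finite \<Rightarrow> real^'n"
  assumes "is_basis_family u" and "\<alpha> > real CARD('n)" and "\<beta> > real CARD('n)"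
    and \<phi>: "\<And>r. r > 0 \<Longrightarrow> \<phi> r = a * r powr (-\<alpha>) - b * r powr (-\<beta>)"
    and t: "t > 0"
  shows "lattice_energy \<phi> (scale_lattice t (lattice_gen u)) =
     a * t powr (-\<alpha>) * epstein_zeta (lattice_gen u) \<alpha> - b * t powr (-\<beta>) * epstein_zeta (lattice_gen u) \<beta>"
proof -
  let ?L = "lattice_gen u - {0}"
  have "scale_lattice t (lattice_gen u) - {0} = (\<lambda>q. t *\<^sub>R q) ` ?L"
    using t unfolding scale_lattice_def by auto
  moreover have "inj_on (\<lambda>q::real^'n. t *\<^sub>R q) ?L"
    using t by (auto simp: inj_on_def)
  ultimately have "lattice_energy \<phi> (scale_lattice t (lattice_gen u)) = (\<Sum>\<^sub>\<infinity>q\<in>?L. \<phi> (t * norm q))"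
    unfolding lattice_energy_def using t by (simp add: infsum_reindex o_def)
  also have "\<dots> = (\<Sum>\<^sub>\<infinity>q\<in>?L. a * t powr (-\<alpha>) * norm q powr (-\<alpha>) + (- b * t powr (-\<beta>)) * norm q powr (-\<beta>))"
    using t by (intro infsum_cong) (simp add: \<phi> powr_mult)
  also have "\<dots> = (\<Sum>\<^sub>\<infinity>q\<in>?L. a * t powr (-\<alpha>) * norm q powr (-\<alpha>)) + (\<Sum>\<^sub>\<infinity>q\<in>?L. (- b * t powr (-\<beta>)) * norm q powr (-\<beta>))"
    by (intro infsum_add summable_on_cmult_right epstein_summable assms(1-3))
  also have "\<dots> = a * t powr (-\<alpha>) * epstein_zeta (lattice_gen u) \<alpha> + (- b * t powr (-\<beta>)) * epstein_zeta (lattice_gen u) \<beta>"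
    unfolding epstein_zeta_def by (intro arg_cong2[where f = "(+)"] infsum_cmult_right epstein_summable assms(1-3))
  finally show ?thesis
    by simp
qed

lemma lj_energy_at_optimal_scale:
  fixes a b za zb \<alpha> \<beta> :: real
  defines "l \<equiv> ((\<alpha> * a * za) / (\<beta> * b * zb)) powr (1 / (\<alpha> - \<beta>))"
  assumes "a > 0" "b > 0" "za > 0" "zb > 0" "\<alpha> > \<beta>" "\<beta> > 0"
  shows "l > 0"
    and "a * l powr (-\<alpha>) * za - b * l powr (-\<beta>) * zb = - ((1 - \<beta> / \<alpha>) * b) * zb * l powr (-\<beta>)"
proof -
  have q: "(\<alpha> * a * za) / (\<beta> * b * zb) > 0"
    using assms by (intro divide_pos_pos mult_pos_pos) auto
  then show l: "l > 0"
    unfolding l_def by (metis powr_gt_zero order_less_irrefl)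
  have "l powr (\<alpha> - \<beta>) = (\<alpha> * a * za) / (\<beta> * b * zb)"
    using q assms by (simp add: l_def powr_powr)
  moreover have "l powr (-\<alpha>) = l powr (-\<beta>) / l powr (\<alpha> - \<beta>)"
    using l by (simp add: powr_diff[symmetric])
  ultimately have "l powr (-\<alpha>) = l powr (-\<beta>) / ((\<alpha> * a * za) / (\<beta> * b * zb))"
    by simp
  with assms(2-) show "a * l powr (-\<alpha>) * za - b * l powr (-\<beta>) * zb = - ((1 - \<beta> / \<alpha>) * b) * zb * l powr (-\<beta>)"
    by (simp add: field_simps)
qed

lemma epstein_zeta_pos_unimodular:
  fixes M :: "(real^'n::finite) set"
  assumes "is_unimodular_lattice M" and "s > real CARD('n)"
  shows "epstein_zeta M s > 0"
  using assms epstein_zeta_pos by (auto simp: is_unimodular_lattice_def)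

lemma lj_lambda_pos:
  fixes M :: "(real^'n::finite) set"
  assumes "is_unimodular_lattice M"
    and "\<alpha> > \<beta>" and "\<beta> > real CARD('n)" and "a > 0" and "b > 0"
  shows "lj_lambda a b \<alpha> \<beta> M > 0"
  using lj_energy_at_optimal_scale(1)[OF assms(4,5) epstein_zeta_pos_unimodular[OF assms(1)]
      epstein_zeta_pos_unimodular[OF assms(1,3)] assms(2)] assms(2,3)
  by (simp add: lj_lambda_def)

lemma is_lattice_lj_scale:
  fixes M :: "(real^'n::finite) set"
  assumes "is_unimodular_lattice M"
    and "\<alpha> > \<beta>" and "\<beta> > real CARD('n)" and "a > 0" and "b > 0"
  shows "is_lattice (scale_lattice (lj_lambda a b \<alpha> \<beta> M) M)"
  using assms(1) lj_lambda_pos[OF assms]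
  by (intro is_lattice_scale_lattice) (auto simp: is_lattice_def is_unimodular_lattice_def)

lemma lattice_energy_lj_scale:
  fixes M :: "(real^'n::finite) set"
  assumes "is_unimodular_lattice M"
    and "\<alpha> > \<beta>" and "\<beta> > real CARD('n)" and "a > 0" and "b > 0"
    and "\<And>r. r > 0 \<Longrightarrow> \<phi> r = a * r powr (-\<alpha>) - b * r powr (-\<beta>)"
  shows "lattice_energy \<phi> (scale_lattice (lj_lambda a b \<alpha> \<beta> M) M)
           = - ((1 - \<beta> / \<alpha>) * b) * epstein_zeta M \<beta> * lj_lambda a b \<alpha> \<beta> M powr (-\<beta>)"
proof -
  obtain u where u: "is_basis_family u" and M: "M = lattice_gen u"
    using assms(1) by (auto simp: is_unimodular_lattice_def)
  have \<alpha>: "\<alpha> > real CARD('n)" and \<beta>: "\<beta> > 0"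
    using assms(2,3) by linarith+
  have "a * lj_lambda a b \<alpha> \<beta> M powr (-\<alpha>) * epstein_zeta M \<alpha> - b * lj_lambda a b \<alpha> \<beta> M powr (-\<beta>) * epstein_zeta M \<beta>
      = - ((1 - \<beta> / \<alpha>) * b) * epstein_zeta M \<beta> * lj_lambda a b \<alpha> \<beta> M powr (-\<beta>)"
    unfolding lj_lambda_def
    by (intro lj_energy_at_optimal_scale(2) assms(2,4,5) \<beta> epstein_zeta_pos_unimodular[OF assms(1)] \<alpha> assms(3))
  then show ?thesis
    using lattice_energy_scale_lattice[OF u \<alpha> assms(3,6) lj_lambda_pos[OF assms(1-5)]] by (simp add: M)
qed

lemma lj_scale_comparison:
  fixes c \<beta> z zd l ld :: real
  assumes "c > 0" and "\<beta> > 0" and "zd \<le> z" and "z > 0" and "l > 0" and "ld > 0"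
  shows "- c * zd * ld powr (-\<beta>) \<le> - c * z * l powr (-\<beta>) \<Longrightarrow> ld \<le> l"
    and "l = ld \<Longrightarrow> - c * z * l powr (-\<beta>) \<le> - c * zd * ld powr (-\<beta>)"
proof -
  assume "- c * zd * ld powr (-\<beta>) \<le> - c * z * l powr (-\<beta>)"
  then have "z * l powr (-\<beta>) \<le> zd * ld powr (-\<beta>)"
    using assms(1) by (simp add: mult.assoc)
  also have "\<dots> \<le> z * ld powr (-\<beta>)"
    using assms(3) by (simp add: mult_right_mono)
  finally have "l powr (-\<beta>) \<le> ld powr (-\<beta>)"
    using assms(4) by simp
  then show "ld \<le> l"
    using assms(2,5) powr_less_mono2_neg[of "-\<beta>" l ld] by (cases "l < ld") auto
next
  assume "l = ld"
  then show "- c * z * l powr (-\<beta>) \<le> - c * zd * ld powr (-\<beta>)"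
    using assms(1,3) by (simp add: mult_right_mono mult_left_mono)
qed

theorem proposition2p2:
  fixes Ld :: "(real^'n::finite) set"
    and a b \<alpha> \<beta> :: real
    and \<phi> :: "real \<Rightarrow> real"
  assumes "\<alpha> > \<beta>" and "\<beta> > real CARD('n)"
    and "a > 0" and "b > 0"
    and "\<And>r. r > 0 \<Longrightarrow> \<phi> r = a * r powr (-\<alpha>) - b * r powr (-\<beta>)"
    and "is_unimodular_lattice Ld"
    and "\<And>L::(real^'n) set. is_unimodular_lattice L \<Longrightarrow> epstein_zeta L \<beta> \<ge> epstein_zeta Ld \<beta>"
    and "\<And>L::(real^'n) set. is_lattice L \<Longrightarrow>
           lattice_energy \<phi> L \<ge> lattice_energy \<phi> (scale_lattice (lj_lambda a b \<alpha> \<beta> Ld) Ld)"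
    and "\<And>L::(real^'n) set. is_lattice L \<Longrightarrow>
           lattice_energy \<phi> L = lattice_energy \<phi> (scale_lattice (lj_lambda a b \<alpha> \<beta> Ld) Ld) \<Longrightarrow>
           isometric_lattices L (scale_lattice (lj_lambda a b \<alpha> \<beta> Ld) Ld)"
  shows "\<forall>L::(real^'n) set. is_unimodular_lattice L \<longrightarrow>
           lj_lambda a b \<alpha> \<beta> L \<ge> lj_lambda a b \<alpha> \<beta> Ld \<and>
           (lj_lambda a b \<alpha> \<beta> L = lj_lambda a b \<alpha> \<beta> Ld \<longrightarrow> isometric_lattices L Ld)"
proof (intro allI impI conjI)
  fix L :: "(real^'n) set"
  assume L: "is_unimodular_lattice L"
  have energy: "lattice_energy \<phi> (scale_lattice (lj_lambda a b \<alpha> \<beta> M) M)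
      = - ((1 - \<beta> / \<alpha>) * b) * epstein_zeta M \<beta> * lj_lambda a b \<alpha> \<beta> M powr (-\<beta>)"
    if "is_unimodular_lattice M" for M :: "(real^'n) set"
    using lattice_energy_lj_scale[OF that assms(1-4)] assms(5) by blast
  have c: "(1 - \<beta> / \<alpha>) * b > 0" and \<beta>: "\<beta> > 0"
    using assms(1,2,4) by (auto simp: field_simps)
  note compare = lj_scale_comparison[OF c \<beta> assms(7)[OF L]
      epstein_zeta_pos_unimodular[OF L assms(2)] lj_lambda_pos[OF L assms(1-4)] lj_lambda_pos[OF assms(6,1-4)]]
  have lattice_L: "is_lattice (scale_lattice (lj_lambda a b \<alpha> \<beta> L) L)"
    using is_lattice_lj_scale[OF L assms(1-4)] .
  show "lj_lambda a b \<alpha> \<beta> L \<ge> lj_lambda a b \<alpha> \<beta> Ld"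
    using compare(1) assms(8)[OF lattice_L] by (simp add: energy L assms(6))
  show "isometric_lattices L Ld" if l: "lj_lambda a b \<alpha> \<beta> L = lj_lambda a b \<alpha> \<beta> Ld"
  proof (rule isometric_lattices_scale_cancel)
    have "lattice_energy \<phi> (scale_lattice (lj_lambda a b \<alpha> \<beta> L) L)
        = lattice_energy \<phi> (scale_lattice (lj_lambda a b \<alpha> \<beta> Ld) Ld)"
      using compare(2)[OF l] assms(8)[OF lattice_L] by (simp add: energy L assms(6))
    then show "isometric_lattices (scale_lattice (lj_lambda a b \<alpha> \<beta> Ld) L) (scale_lattice (lj_lambda a b \<alpha> \<beta> Ld) Ld)"
      using assms(9)[OF lattice_L] by (simp add: l)
    show "lj_lambda a b \<alpha> \<beta> Ld \<noteq> 0"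
      using lj_lambda_pos[OF assms(6,1-4)] by simp
  qed
qed

end
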